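(* Consider the chance-constrained network design problem described in the context, with $\alpha\in[0,1]$. For each commodity $k\in K$ define $$\bar d^k=\min_{z\in\{0,1\}^S}\Big\{\sum_{s=1}^S d^k(\omega_s)p_s(1-z_s)\ \Big|\ \sum_{s=1}^S p_sz_s\le\alpha\Big\}.$$ Then for every $y\in\{0,1\}^{|A|}$ satisfying $\sum_{s\in[S]}p_s\mathbf{1}\{SP(y,\omega_s)\text{ is infeasible}\}\le\alpha$ there exist $\bar x^k_{ij}\ge0$ ($k\in K$, $(i,j)\in A^k$) such that $$\sum_{j:(j,i)\in A^k}\bar x^k_{ji}=\sum_{j:(i,j)\in A^k}\bar x^k_{ij}\ \ \forall k\in K,\ i\in N\setminus\{O(k),D(k)\},$$ $$\sum_{k\in K:(i,j)\in A^k}\bar x^k_{ij}\le u_{ij}y_{ij}\ \ \forall (i,j)\in A,\qquad \sum_{j:(j,D(k))\in A^k}\bar x^k_{jD(k)}\ge\bar d^k\ \ \forall k\in K.$$ That is, these constraints (in variables $y$ and $\bar x$) are valid inequalities for the problem.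
   Context: Directed graph $G=(N,A)$; arc $(i,j)$ built at cost $f_{ij}\ge0$ with capacity $u_{ij}\ge0$ when $y_{ij}=1$. Commodities $K$, each with origin $O(k)$ and destination $D(k)$; admissible arcs $A^k=\{(i,j)\in A: j\neq O(k),\ i\neq D(k)\}$. Finitely many scenarios $\omega_s$, $s\in[S]=\{1,\dots,S\}$, with probabilities $p_s>0$, $\sum_s p_s=1$, and demands $d^k(\omega_s)\ge0$. $SP(y,\omega)$ is the system in flows $x^k_{ij}\ge0$ ($k\in K$, $(i,j)\in A^k$): flow conservation $\sum_{j:(j,i)\in A}x^k_{ji}=\sum_{j:(i,j)\in A}x^k_{ij}$ for all $k$ and $i\in N\setminus\{O(k),D(k)\}$ (sums over arcs in $A^k$); joint capacity $\sum_{k:(i,j)\in A^k}x^k_{ij}\le u_{ij}y_{ij}$ for all $(i,j)\in A$; demand $\sum_{j:(j,D(k))\in A^k}x^k_{jD(k)}\ge d^k(\omega)$ for all $k\in K$. The problem is $\min\{f^\top y: y\in\{0,1\}^{|A|},\ \sum_s p_s\mathbf 1\{SP(y,\omega_s)\text{ infeasible}\}\le\alpha\}$. *)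

theory Defs
  imports Complex_Main "HOL-Library.FuncSet"
begin

definition adm_arcs :: "('n \<times> 'n) set \<Rightarrow> ('k \<Rightarrow> 'n) \<Rightarrow> ('k \<Rightarrow> 'n) \<Rightarrow> 'k \<Rightarrow> ('n \<times> 'n) set" where
  "adm_arcs A Or D k = {(i, j) \<in> A. j \<noteq> Or k \<and> i \<noteq> D k}"

definition flow_system :: "'n set \<Rightarrow> ('n \<times> 'n) set \<Rightarrow> 'k set \<Rightarrow> ('k \<Rightarrow> 'n) \<Rightarrow> ('k \<Rightarrow> 'n)
    \<Rightarrow> ('n \<times> 'n \<Rightarrow> real) \<Rightarrow> ('n \<times> 'n \<Rightarrow> real) \<Rightarrow> ('k \<Rightarrow> real)
    \<Rightarrow> ('k \<Rightarrow> 'n \<times> 'n \<Rightarrow> real) \<Rightarrow> bool" where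
  "flow_system N A K Or D u y dem x \<longleftrightarrow>
     (\<forall>k\<in>K. \<forall>e\<in>adm_arcs A Or D k. 0 \<le> x k e) \<and>
     (\<forall>k\<in>K. \<forall>i\<in>N - {Or k, D k}.
        (\<Sum>j\<in>{j. (j, i) \<in> adm_arcs A Or D k}. x k (j, i)) =
        (\<Sum>j\<in>{j. (i, j) \<in> adm_arcs A Or D k}. x k (i, j))) \<and>
     (\<forall>e\<in>A. (\<Sum>k\<in>{k\<in>K. e \<in> adm_arcs A Or D k}. x k e) \<le> u e * y e) \<and>
     (\<forall>k\<in>K. (\<Sum>j\<in>{j. (j, D k) \<in> adm_arcs A Or D k}. x k (j, D k)) \<ge> dem k)"

definition SP_feasible :: "'n set \<Rightarrow> ('n \<times> 'n) set \<Rightarrow> 'k set \<Rightarrow> ('k \<Rightarrow> 'n) \<Rightarrow> ('k \<Rightarrow> 'n)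
    \<Rightarrow> ('n \<times> 'n \<Rightarrow> real) \<Rightarrow> ('n \<times> 'n \<Rightarrow> real) \<Rightarrow> ('k \<Rightarrow> nat \<Rightarrow> real) \<Rightarrow> nat \<Rightarrow> bool" where
  "SP_feasible N A K Or D u y d s \<longleftrightarrow> (\<exists>x. flow_system N A K Or D u y (\<lambda>k. d k s) x)"

definition dbar :: "nat \<Rightarrow> (nat \<Rightarrow> real) \<Rightarrow> ('k \<Rightarrow> nat \<Rightarrow> real) \<Rightarrow> real \<Rightarrow> 'k \<Rightarrow> real" where
  "dbar S p d \<alpha> k = Min {(\<Sum>s\<in>{1..S}. d k s * p s * (1 - z s)) | z.
       z \<in> {1..S} \<rightarrow> {0, 1} \<and> (\<Sum>s\<in>{1..S}. p s * z s) \<le> \<alpha>}"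

end

theory Submission
  imports Defs
begin

text \<open>Let F be the set of scenarios in which SP(y, \<omega>_s) is feasible and pick a feasible flow
  x^s for each s \<in> F. The constraints of SP are linear with a nonnegative right-hand side
  u y, so xbar = \<Sum>_{s \<in> F} p_s x^s, whose weights sum to at most 1, is again a flow within
  the capacities and delivers \<Sum>_{s \<in> F} p_s d^k(\<omega>_s) to D(k). As the scenarios outside F
  have total probability at most \<alpha>, their indicator z is admissible in the definition of
  dbar^k, with objective value exactly this delivered demand.\<close>

lemma flow_system_demand_mono:
  assumes "flow_system N A K Or D u y dem x" and "\<forall>k\<in>K. dem' k \<le> dem k"
  shows "flow_system N A K Or D u y dem' x"
  using assms unfolding flow_system_def by (meson order_trans)

lemma flow_system_weighted_sum:
  assumes w_nonneg: "\<forall>i\<in>I. 0 \<le> w i" and w_sum: "(\<Sum>i\<in>I. w i) \<le> 1"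
    and cap_nonneg: "\<forall>e\<in>A. 0 \<le> u e * y e"
    and flows: "\<forall>i\<in>I. flow_system N A K Or D u y (dem i) (x i)"
  shows "flow_system N A K Or D u y (\<lambda>k. \<Sum>i\<in>I. w i * dem i k) (\<lambda>k e. \<Sum>i\<in>I. w i * x i k e)"
  unfolding flow_system_def
proof (intro conjI ballI)
  fix k e assume "k \<in> K" "e \<in> adm_arcs A Or D k"
  then show "0 \<le> (\<Sum>i\<in>I. w i * x i k e)"
    using w_nonneg flows by (intro sum_nonneg mult_nonneg_nonneg) (auto simp: flow_system_def)
next
  fix k i assume "k \<in> K" "i \<in> N - {Or k, D k}"
  have "(\<Sum>j\<in>{j. (j, i) \<in> adm_arcs A Or D k}. \<Sum>l\<in>I. w l * x l k (j, i))
      = (\<Sum>l\<in>I. w l * (\<Sum>j\<in>{j. (j, i) \<in> adm_arcs A Or D k}. x l k (j, i)))"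
    by (simp add: sum.swap[of _ _ I] sum_distrib_left)
  also have "\<dots> = (\<Sum>l\<in>I. w l * (\<Sum>j\<in>{j. (i, j) \<in> adm_arcs A Or D k}. x l k (i, j)))"
    using flows \<open>k \<in> K\<close> \<open>i \<in> N - {Or k, D k}\<close>
    by (intro sum.cong refl) (auto simp: flow_system_def)
  also have "\<dots> = (\<Sum>j\<in>{j. (i, j) \<in> adm_arcs A Or D k}. \<Sum>l\<in>I. w l * x l k (i, j))"
    by (simp add: sum.swap[of _ _ I] sum_distrib_left)
  finally show "(\<Sum>j\<in>{j. (j, i) \<in> adm_arcs A Or D k}. \<Sum>l\<in>I. w l * x l k (j, i)) =
      (\<Sum>j\<in>{j. (i, j) \<in> adm_arcs A Or D k}. \<Sum>l\<in>I. w l * x l k (i, j))" .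
next
  fix e assume e: "e \<in> A"
  have "(\<Sum>k\<in>{k\<in>K. e \<in> adm_arcs A Or D k}. \<Sum>i\<in>I. w i * x i k e)
      = (\<Sum>i\<in>I. w i * (\<Sum>k\<in>{k\<in>K. e \<in> adm_arcs A Or D k}. x i k e))"
    by (simp add: sum.swap[of _ _ I] sum_distrib_left)
  also have "\<dots> \<le> (\<Sum>i\<in>I. w i * (u e * y e))"
    using e w_nonneg flows by (intro sum_mono mult_left_mono) (auto simp: flow_system_def)
  also have "\<dots> = (\<Sum>i\<in>I. w i) * (u e * y e)"
    by (simp add: sum_distrib_right)
  also have "\<dots> \<le> u e * y e"
    using mult_right_mono[OF w_sum] cap_nonneg e by simp
  finally show "(\<Sum>k\<in>{k\<in>K. e \<in> adm_arcs A Or D k}. \<Sum>i\<in>I. w i * x i k e) \<le> u e * y e" .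
next
  fix k assume "k \<in> K"
  then have "(\<Sum>i\<in>I. w i * dem i k)
      \<le> (\<Sum>i\<in>I. w i * (\<Sum>j\<in>{j. (j, D k) \<in> adm_arcs A Or D k}. x i k (j, D k)))"
    using w_nonneg flows by (intro sum_mono mult_left_mono) (auto simp: flow_system_def)
  then show "(\<Sum>j\<in>{j. (j, D k) \<in> adm_arcs A Or D k}. \<Sum>i\<in>I. w i * x i k (j, D k))
      \<ge> (\<Sum>i\<in>I. w i * dem i k)"
    by (simp add: sum.swap[of _ _ I] sum_distrib_left)
qed

lemma dbar_le:
  assumes "z \<in> {1..S} \<rightarrow> {0, 1}" and "(\<Sum>s\<in>{1..S}. p s * z s) \<le> \<alpha>"
  shows "dbar S p d \<alpha> k \<le> (\<Sum>s\<in>{1..S}. d k s * p s * (1 - z s))"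
proof -
  define obj where "obj z = (\<Sum>s\<in>{1..S}. d k s * p s * (1 - z s))" for z :: "nat \<Rightarrow> real"
  let ?M = "{obj z | z. z \<in> {1..S} \<rightarrow> {0, 1} \<and> (\<Sum>s\<in>{1..S}. p s * z s) \<le> \<alpha>}"
  \<comment> \<open>obj only sees z on {1..S}, so ?M is covered by the finitely many restricted vectors\<close>
  have "?M \<subseteq> obj ` PiE {1..S} (\<lambda>_. {0, 1})"
  proof clarify
    fix z :: "nat \<Rightarrow> real" assume "z \<in> {1..S} \<rightarrow> {0, 1}"
    then have "restrict z {1..S} \<in> PiE {1..S} (\<lambda>_. {0, 1})" and "obj z = obj (restrict z {1..S})"
      by (auto simp: obj_def)
    then show "obj z \<in> obj ` PiE {1..S} (\<lambda>_. {0, 1})" by blast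
  qed
  then have "finite ?M" by (rule finite_subset) (simp add: finite_PiE)
  moreover have "obj z \<in> ?M" using assms by blast
  ultimately show ?thesis unfolding dbar_def obj_def[symmetric] by (rule Min_le)
qed

lemma dbar_le_feasible_mass:
  assumes "(\<Sum>s\<in>{1..S}. p s * (if P s then 0 else 1)) \<le> \<alpha>"
  shows "dbar S p d \<alpha> k \<le> (\<Sum>s\<in>{s\<in>{1..S}. P s}. p s * d k s)"
proof -
  define z where "z s = (if P s then 0 else 1 :: real)" for s
  have "dbar S p d \<alpha> k \<le> (\<Sum>s\<in>{1..S}. d k s * p s * (1 - z s))"
    using assms by (intro dbar_le) (auto simp: z_def)
  also have "\<dots> = (\<Sum>s\<in>{1..S}. if P s then p s * d k s else 0)"
    by (intro sum.cong) (auto simp: z_def)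
  also have "\<dots> = (\<Sum>s\<in>{s\<in>{1..S}. P s}. p s * d k s)"
    by (rule sum.inter_filter[symmetric]) simp
  finally show ?thesis .
qed

theorem proposition2:
  fixes N :: "'n set" and A :: "('n \<times> 'n) set" and K :: "'k set"
    and Or D :: "'k \<Rightarrow> 'n" and f u y :: "'n \<times> 'n \<Rightarrow> real"
    and S :: nat and p :: "nat \<Rightarrow> real" and d :: "'k \<Rightarrow> nat \<Rightarrow> real" and \<alpha> :: real
  assumes "finite N" and "finite A" and "A \<subseteq> N \<times> N" and "finite K"
    and "\<forall>k\<in>K. Or k \<in> N \<and> D k \<in> N"
    and "\<forall>e\<in>A. 0 \<le> f e \<and> 0 \<le> u e"
    and "\<forall>s\<in>{1..S}. 0 < p s" and "(\<Sum>s\<in>{1..S}. p s) = 1"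
    and "\<forall>k\<in>K. \<forall>s\<in>{1..S}. 0 \<le> d k s"
    and "0 \<le> \<alpha>" and "\<alpha> \<le> 1"
    and "\<forall>e\<in>A. y e \<in> {0, 1}"
    and "(\<Sum>s\<in>{1..S}. p s * (if SP_feasible N A K Or D u y d s then 0 else 1)) \<le> \<alpha>"
  shows "\<exists>x. flow_system N A K Or D u y (dbar S p d \<alpha>) x"
proof -
  define F where "F = {s\<in>{1..S}. SP_feasible N A K Or D u y d s}"
  have "\<forall>s\<in>F. \<exists>x. flow_system N A K Or D u y (\<lambda>k. d k s) x"
    unfolding F_def SP_feasible_def by blast
  then obtain xs where xs: "\<forall>s\<in>F. flow_system N A K Or D u y (\<lambda>k. d k s) (xs s)"
    by (metis bchoice)
  have "(\<Sum>s\<in>F. p s) \<le> (\<Sum>s\<in>{1..S}. p s)"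
    using assms(7) by (intro sum_mono2) (auto simp: F_def less_imp_le)
  then have "flow_system N A K Or D u y (\<lambda>k. \<Sum>s\<in>F. p s * d k s) (\<lambda>k e. \<Sum>s\<in>F. p s * xs s k e)"
    using assms(6,7,8,12) xs
    by (intro flow_system_weighted_sum) (auto simp: F_def less_imp_le)
  moreover have "\<forall>k\<in>K. dbar S p d \<alpha> k \<le> (\<Sum>s\<in>F. p s * d k s)"
    using assms(13) unfolding F_def by (blast intro: dbar_le_feasible_mass)
  ultimately show ?thesis by (blast intro: flow_system_demand_mono)
qed

end
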